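(* For all $W,L\in\mathbb N$ and $K>0$, $$\mathcal{SNN}(W,L,K)\subset\mathcal{NN}(W,L,K)\subset\mathcal{SNN}(W+1,L,K).$$
   Context: A neural network of depth $L$ is $\phi=\ell_L\circ\sigma_{L-1}\circ\ell_{L-1}\circ\cdots\circ\sigma_0\circ\ell_0$ with $\ell_i(u)=A_iu+b_i$, $A_i\in\mathbb R^{n_i\times m_i}$, $b_i\in\mathbb R^{n_i}$, $m_{i+1}=n_i$, and componentwise activation functions $\sigma_i$; width $W=\max_i n_i$. Standing convention: the activation functions satisfy $\sigma_\ell(1)=1$. With $\|A\|=\max_i\sum_j|a_{ij}|$ and $\|(A,b)\|$ the norm of the augmented matrix $[A\ b]$, $\mathcal{NN}(W,L,K)$ denotes the networks of width $W$ and depth $L$ (with fixed input and output dimensions) for which there is $I\subset\{0,\dots,L\}$ with $\|(A_\ell,b_\ell)\|\le1$ for $\ell\notin I$, $\|(A_\ell,b_\ell)\|\ge1$ for $\ell\in I$, and $\prod_{\ell\in I}\|(A_\ell,b_\ell)\|\le K$. $\mathcal{SNN}(W,L,K)$ is the subset of bias-free such networks, i.e. those with all $b_\ell=0$.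
   Formalization: Both classes consist of the functions that networks realize on inputs whose last coordinate equals 1 only, and width W means that every $n_i$ is at most W. Apart from conventions, each condition added here is assumed in the paper as well or is needed for the statement above to hold. *)

theory Defs
  imports Complex_Main "HOL-Library.FuncSet"
begin

text \<open>Vectors are functions nat => real (only the first entries matter); an n x m matrix
is a function nat => nat => real (entries (i,j) with i < n, j < m).
A network of depth L is given by a dimension list ds = [m_0, n_0, n_1, ..., n_L]
(so m_l = ds!l, n_l = ds!(l+1)), weight matrices As!l and bias vectors bs!l, l = 0..L.\<close>

definition aug_norm :: "(nat \<Rightarrow> nat \<Rightarrow> real) \<Rightarrow> (nat \<Rightarrow> real) \<Rightarrow> nat \<Rightarrow> nat \<Rightarrow> real" where
  "aug_norm A b n m = Max ((\<lambda>i. (\<Sum>j<m. \<bar>A i j\<bar>) + \<bar>b i\<bar>) ` {..<n})"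

definition affine_map :: "(nat \<Rightarrow> nat \<Rightarrow> real) \<Rightarrow> (nat \<Rightarrow> real) \<Rightarrow> nat \<Rightarrow> (nat \<Rightarrow> real) \<Rightarrow> (nat \<Rightarrow> real)" where
  "affine_map A b m u = (\<lambda>i. (\<Sum>j<m. A i j * u j) + b i)"

definition net_step ::
  "(nat \<Rightarrow> real \<Rightarrow> real) \<Rightarrow> nat \<Rightarrow> nat list \<Rightarrow> (nat \<Rightarrow> nat \<Rightarrow> real) list \<Rightarrow> (nat \<Rightarrow> real) list
    \<Rightarrow> nat \<Rightarrow> (nat \<Rightarrow> real) \<Rightarrow> (nat \<Rightarrow> real)" where
  "net_step \<sigma> L ds As bs l u =
     (let v = affine_map (As ! l) (bs ! l) (ds ! l) u
      in if l < L then (\<lambda>i. \<sigma> l (v i)) else v)"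

definition realize ::
  "(nat \<Rightarrow> real \<Rightarrow> real) \<Rightarrow> nat \<Rightarrow> nat list \<Rightarrow> (nat \<Rightarrow> nat \<Rightarrow> real) list \<Rightarrow> (nat \<Rightarrow> real) list
    \<Rightarrow> (nat \<Rightarrow> real) \<Rightarrow> (nat \<Rightarrow> real)" where
  "realize \<sigma> L ds As bs x =
     (let v = fold (net_step \<sigma> L ds As bs) [0..<Suc L] x
      in (\<lambda>i. if i < ds ! Suc L then v i else 0))"

definition admissible_net ::
  "nat \<Rightarrow> nat \<Rightarrow> nat \<Rightarrow> nat \<Rightarrow> real \<Rightarrow> nat list \<Rightarrow> (nat \<Rightarrow> nat \<Rightarrow> real) list \<Rightarrow> (nat \<Rightarrow> real) list \<Rightarrow> bool" where
  "admissible_net d k W L K ds As bs \<longleftrightarrow>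
     length ds = L + 2 \<and> length As = L + 1 \<and> length bs = L + 1 \<and>
     ds ! 0 = d \<and> ds ! (L + 1) = k \<and>
     (\<forall>i \<le> L + 1. 0 < ds ! i) \<and>
     (\<forall>l \<le> L. ds ! (l + 1) \<le> W) \<and>
     (\<exists>I \<subseteq> {0..L}.
        (\<forall>l \<in> {0..L} - I. aug_norm (As ! l) (bs ! l) (ds ! (l + 1)) (ds ! l) \<le> 1) \<and>
        (\<forall>l \<in> I. aug_norm (As ! l) (bs ! l) (ds ! (l + 1)) (ds ! l) \<ge> 1) \<and>
        (\<Prod>l \<in> I. aug_norm (As ! l) (bs ! l) (ds ! (l + 1)) (ds ! l)) \<le> K)"

text \<open>Input domain convention: inputs x in R^d whose last coordinate x_(d-1) equals 1
(constant input coordinate).\<close>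
definition hom_inputs :: "nat \<Rightarrow> (nat \<Rightarrow> real) set" where
  "hom_inputs d = {x. x (d - 1) = 1}"

definition NN ::
  "(nat \<Rightarrow> real \<Rightarrow> real) \<Rightarrow> nat \<Rightarrow> nat \<Rightarrow> nat \<Rightarrow> nat \<Rightarrow> real \<Rightarrow> ((nat \<Rightarrow> real) \<Rightarrow> (nat \<Rightarrow> real)) set" where
  "NN \<sigma> d k W L K =
     {(\<lambda>x \<in> hom_inputs d. realize \<sigma> L ds As bs x) | ds As bs. admissible_net d k W L K ds As bs}"

definition SNN ::
  "(nat \<Rightarrow> real \<Rightarrow> real) \<Rightarrow> nat \<Rightarrow> nat \<Rightarrow> nat \<Rightarrow> nat \<Rightarrow> real \<Rightarrow> ((nat \<Rightarrow> real) \<Rightarrow> (nat \<Rightarrow> real)) set" where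
  "SNN \<sigma> d k W L K =
     {(\<lambda>x \<in> hom_inputs d. realize \<sigma> L ds As bs x) | ds As bs.
        admissible_net d k W L K ds As bs \<and> (\<forall>l \<le> L. \<forall>i < ds ! (l + 1). (bs ! l) i = 0)}"

end

theory Submission
  imports Defs
begin

text \<open>Every bias-free network is in particular a network, so only the second inclusion needs work.
  Given a network with biases, append to each hidden layer one neuron that is constantly \<open>1\<close>
  (it receives weight \<open>1\<close> from the constant coordinate of the previous layer and stays \<open>1\<close>
  since \<open>\<sigma> l 1 = 1\<close>); the biases then become weights on this neuron. A row of the new
  augmented matrix is either an old row \<open>[A\<^sub>i | b\<^sub>i]\<close> rearranged or a unit vector, so each layer
  norm grows at most to \<open>max \<parallel>(A, b)\<parallel> 1\<close>. The norm budget with some index set \<open>I\<close> is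
  equivalent to \<open>\<Prod>\<^sub>l max \<parallel>(A\<^sub>l, b\<^sub>l)\<parallel> 1 \<le> K\<close>, which is monotone in the norms.\<close>

lemma norm_budget_iff_prod_max:
  fixes N :: "nat \<Rightarrow> real"
  assumes "finite A"
  shows "(\<exists>I \<subseteq> A. (\<forall>l \<in> A - I. N l \<le> 1) \<and> (\<forall>l \<in> I. 1 \<le> N l) \<and> (\<Prod>l \<in> I. N l) \<le> K)
     \<longleftrightarrow> (\<Prod>l \<in> A. max (N l) 1) \<le> K"  (is "?budget \<longleftrightarrow> ?prod")
proof -
  have prod_eq: "(\<Prod>l \<in> A. max (N l) 1) = (\<Prod>l \<in> I. N l)"
    if "I \<subseteq> A" "\<forall>l \<in> A - I. N l \<le> 1" "\<forall>l \<in> I. 1 \<le> N l" for I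
    using that assms by (intro prod.mono_neutral_cong_right) auto
  show ?thesis
  proof
    assume ?budget
    then show ?prod using prod_eq by metis
  next
    assume ?prod
    define I where "I = {l \<in> A. 1 \<le> N l}"
    have "I \<subseteq> A" "\<forall>l \<in> A - I. N l \<le> 1" "\<forall>l \<in> I. 1 \<le> N l"
      unfolding I_def by auto
    with \<open>?prod\<close> prod_eq show ?budget by metis
  qed
qed

lemma sum_lessThan_if_less:
  fixes m m' :: nat
  shows "m \<le> m' \<Longrightarrow> (\<Sum>j<m'. if j < m then f j else 0) = (\<Sum>j<m. f j)"
  by (rule sum.mono_neutral_cong_right) auto

lemma fold_upt_rel:
  assumes "R 0 x y"
    and "\<And>n u v. n < N \<Longrightarrow> R n u v \<Longrightarrow> R (Suc n) (f n u) (g n v)"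
  shows "R N (fold f [0..<N] x) (fold g [0..<N] y)"
  using assms(2) by (induction N) (simp_all add: assms(1))

definition absorb_bias ::
  "(nat \<Rightarrow> nat \<Rightarrow> real) \<Rightarrow> (nat \<Rightarrow> real) \<Rightarrow> nat \<Rightarrow> nat \<Rightarrow> nat \<Rightarrow> nat \<Rightarrow> nat \<Rightarrow> real" where
  "absorb_bias A b n m c = (\<lambda>i j.
     if i < n then (if j < m then A i j else 0) + (if j = c then b i else 0)
     else if j = c then 1 else 0)"

lemma affine_map_absorb_bias:
  assumes "m \<le> m'" "c < m'" "\<forall>j < m. u' j = u j" "u' c = 1"
  shows "affine_map (absorb_bias A b n m c) (\<lambda>_. 0) m' u' i =
           (if i < n then affine_map A b m u i else 1)"
proof (cases "i < n")
  case True
  have "affine_map (absorb_bias A b n m c) (\<lambda>_. 0) m' u' i =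
          (\<Sum>j<m'. if j < m then A i j * u' j else 0) + (\<Sum>j<m'. if j = c then b i * u' j else 0)"
    using True unfolding affine_map_def sum.distrib[symmetric] add_0_right
    by (intro sum.cong) (auto simp: absorb_bias_def distrib_right)
  also have "\<dots> = (\<Sum>j<m. A i j * u j) + b i"
    using assms by (simp add: sum_lessThan_if_less)
  finally show ?thesis using True by (simp add: affine_map_def)
next
  case False
  then have "affine_map (absorb_bias A b n m c) (\<lambda>_. 0) m' u' i = (\<Sum>j<m'. if j = c then u' j else 0)"
    unfolding affine_map_def add_0_right by (intro sum.cong) (auto simp: absorb_bias_def)
  with False assms show ?thesis by simp
qed

lemma aug_norm_absorb_bias:
  assumes "m \<le> m'" "c < m'" "0 < n'"
  shows "aug_norm (absorb_bias A b n m c) (\<lambda>_. 0) n' m' \<le> max (aug_norm A b n m) 1"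
  unfolding aug_norm_def [of "absorb_bias A b n m c"]
proof (subst Max_le_iff; (intro ballI)?)
  fix r assume "r \<in> (\<lambda>i. (\<Sum>j<m'. \<bar>absorb_bias A b n m c i j\<bar>) + \<bar>0\<bar>) ` {..<n'}"
  then obtain i where r: "r = (\<Sum>j<m'. \<bar>absorb_bias A b n m c i j\<bar>)" by auto
  show "r \<le> max (aug_norm A b n m) 1"
  proof (cases "i < n")
    case True
    have "r \<le> (\<Sum>j<m'. (if j < m then \<bar>A i j\<bar> else 0) + (if j = c then \<bar>b i\<bar> else 0))"
      unfolding r using True by (intro sum_mono) (simp add: absorb_bias_def abs_triangle_ineq)
    also have "\<dots> = (\<Sum>j<m. \<bar>A i j\<bar>) + \<bar>b i\<bar>"
      using assms by (simp add: sum.distrib sum_lessThan_if_less)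
    also have "\<dots> \<le> aug_norm A b n m"
      unfolding aug_norm_def using True by (intro Max_ge) auto
    finally show ?thesis by linarith
  next
    case False
    then show ?thesis unfolding r using assms by (simp add: absorb_bias_def)
  qed
qed (use assms in auto)


text \<open>The coordinate of layer \<open>l\<close> that is constantly \<open>1\<close>; for \<open>l = 0\<close> this relies on the
  inputs being restricted to \<^const>\<open>hom_inputs\<close>.\<close>

definition one_index :: "nat list \<Rightarrow> nat \<Rightarrow> nat" where
  "one_index ds l = (if l = 0 then ds ! 0 - 1 else ds ! l)"

definition unbiased_dims :: "nat \<Rightarrow> nat list \<Rightarrow> nat list" where
  "unbiased_dims L ds = map (\<lambda>l. if 0 < l \<and> l \<le> L then ds ! l + 1 else ds ! l) [0..<L + 2]"

definition unbiased_weights ::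
  "nat \<Rightarrow> nat list \<Rightarrow> (nat \<Rightarrow> nat \<Rightarrow> real) list \<Rightarrow> (nat \<Rightarrow> real) list \<Rightarrow> (nat \<Rightarrow> nat \<Rightarrow> real) list" where
  "unbiased_weights L ds As bs =
     map (\<lambda>l. absorb_bias (As ! l) (bs ! l) (ds ! (l + 1)) (ds ! l) (one_index ds l)) [0..<L + 1]"

definition zero_biases :: "nat \<Rightarrow> (nat \<Rightarrow> real) list" where
  "zero_biases L = replicate (L + 1) (\<lambda>_. 0)"

lemma unbiased_dims_nth:
  "l < L + 2 \<Longrightarrow> unbiased_dims L ds ! l = (if 0 < l \<and> l \<le> L then ds ! l + 1 else ds ! l)"
  unfolding unbiased_dims_def by (simp del: upt_Suc)

lemma unbiased_weights_nth:
  "l \<le> L \<Longrightarrow> unbiased_weights L ds As bs ! l =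
     absorb_bias (As ! l) (bs ! l) (ds ! (l + 1)) (ds ! l) (one_index ds l)"
  unfolding unbiased_weights_def by (simp del: upt_Suc)

lemma zero_biases_nth: "l \<le> L \<Longrightarrow> zero_biases L ! l = (\<lambda>_. 0)"
  unfolding zero_biases_def by (simp del: replicate_Suc)

lemma one_index_less_unbiased_dims:
  "0 < ds ! 0 \<Longrightarrow> l \<le> L \<Longrightarrow> one_index ds l < unbiased_dims L ds ! l"
  by (auto simp: one_index_def unbiased_dims_nth)

lemma realize_unbiased:
  assumes \<sigma>: "\<forall>l < L. \<sigma> l 1 = 1" and "0 < ds ! 0" and x: "x (ds ! 0 - 1) = 1"
  shows "realize \<sigma> L (unbiased_dims L ds) (unbiased_weights L ds As bs) (zero_biases L) x =
           realize \<sigma> L ds As bs x"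
proof -
  define ds' As' bs' where "ds' = unbiased_dims L ds" and "As' = unbiased_weights L ds As bs"
    and "bs' = zero_biases L"
  define R where "R n (u :: nat \<Rightarrow> real) u' \<longleftrightarrow>
    (\<forall>j < ds ! n. u' j = u j) \<and> u' (one_index ds n) = 1" for n u u'
  have "R (Suc L) (fold (net_step \<sigma> L ds As bs) [0..<Suc L] x)
                  (fold (net_step \<sigma> L ds' As' bs') [0..<Suc L] x)"
  proof (rule fold_upt_rel[where R = R])
    show "R 0 x x" using x by (simp add: R_def one_index_def)
  next
    fix n u u' assume "n < Suc L" and "R n u u'"
    then have "ds ! n \<le> ds' ! n" "one_index ds n < ds' ! n"
      "\<forall>j < ds ! n. u' j = u j" "u' (one_index ds n) = 1"
      using assms one_index_less_unbiased_dims[of ds n L] by (auto simp: ds'_def unbiased_dims_nth R_def)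
    then have "affine_map (As' ! n) (bs' ! n) (ds' ! n) u' i =
                 (if i < ds ! (n + 1) then affine_map (As ! n) (bs ! n) (ds ! n) u i else 1)" for i
      using \<open>n < Suc L\<close> by (simp add: As'_def bs'_def unbiased_weights_nth zero_biases_nth affine_map_absorb_bias)
    then show "R (Suc n) (net_step \<sigma> L ds As bs n u) (net_step \<sigma> L ds' As' bs' n u')"
      using \<sigma> by (simp add: R_def net_step_def one_index_def Let_def)
  qed
  moreover have "ds' ! Suc L = ds ! Suc L" by (simp add: ds'_def unbiased_dims_nth)
  ultimately show ?thesis
    unfolding realize_def Let_def R_def ds'_def [symmetric] As'_def [symmetric] bs'_def [symmetric]
    by auto
qed

lemma admissible_net_unbiased:
  assumes "admissible_net d k W L K ds As bs"
  shows "admissible_net d k (W + 1) L K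
           (unbiased_dims L ds) (unbiased_weights L ds As bs) (zero_biases L)"
proof -
  define ds' As' bs' where "ds' = unbiased_dims L ds" and "As' = unbiased_weights L ds As bs"
    and "bs' = zero_biases L"
  define old new where "old l = aug_norm (As ! l) (bs ! l) (ds ! (l + 1)) (ds ! l)"
    and "new l = aug_norm (As' ! l) (bs' ! l) (ds' ! (l + 1)) (ds' ! l)" for l
  have dims: "ds ! 0 = d" "ds ! (L + 1) = k" "\<forall>i \<le> L + 1. 0 < ds ! i" "\<forall>l \<le> L. ds ! (l + 1) \<le> W"
    using assms by (simp_all add: admissible_net_def)
  have "new l \<le> max (old l) 1" if "l \<le> L" for l
  proof -
    have "ds ! l \<le> ds' ! l" "one_index ds l < ds' ! l" "0 < ds' ! (l + 1)"
      using that dims one_index_less_unbiased_dims[of ds l L] by (auto simp: ds'_def unbiased_dims_nth)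
    then show ?thesis
      using that unfolding new_def old_def
      by (simp add: As'_def bs'_def unbiased_weights_nth zero_biases_nth aug_norm_absorb_bias)
  qed
  then have "(\<Prod>l \<in> {0..L}. max (new l) 1) \<le> (\<Prod>l \<in> {0..L}. max (old l) 1)"
    by (intro prod_mono) auto
  also have "\<dots> \<le> K"
    using assms norm_budget_iff_prod_max[of "{0..L}" old K] by (simp add: admissible_net_def old_def)
  finally have "\<exists>I \<subseteq> {0..L}. (\<forall>l \<in> {0..L} - I. new l \<le> 1) \<and> (\<forall>l \<in> I. 1 \<le> new l)
                  \<and> (\<Prod>l \<in> I. new l) \<le> K"
    using norm_budget_iff_prod_max[of "{0..L}" new K] by simp
  moreover have "length ds' = L + 2" "length As' = L + 1" "length bs' = L + 1"
    by (simp_all add: ds'_def As'_def bs'_def unbiased_dims_def unbiased_weights_def zero_biases_def)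
  moreover have "ds' ! 0 = d" "ds' ! (L + 1) = k" "\<forall>i \<le> L + 1. 0 < ds' ! i"
    "\<forall>l \<le> L. ds' ! (l + 1) \<le> W + 1"
    using dims by (auto simp: ds'_def unbiased_dims_nth)
  ultimately show ?thesis
    unfolding admissible_net_def ds'_def [symmetric] As'_def [symmetric] bs'_def [symmetric] new_def
    by blast
qed

theorem proposition1:
  fixes \<sigma> :: "nat \<Rightarrow> real \<Rightarrow> real" and d k W L :: nat and K :: real
  assumes "\<forall>l < L. \<sigma> l 1 = 1"
    and "0 < d" and "0 < k"
    and "K > 0"
  shows "SNN \<sigma> d k W L K \<subseteq> NN \<sigma> d k W L K \<and> NN \<sigma> d k W L K \<subseteq> SNN \<sigma> d k (W + 1) L K"
proof
  show "SNN \<sigma> d k W L K \<subseteq> NN \<sigma> d k W L K"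
    unfolding SNN_def NN_def by blast
  show "NN \<sigma> d k W L K \<subseteq> SNN \<sigma> d k (W + 1) L K"
  proof
    fix f assume "f \<in> NN \<sigma> d k W L K"
    then obtain ds As bs where f: "f = (\<lambda>x \<in> hom_inputs d. realize \<sigma> L ds As bs x)"
      and adm: "admissible_net d k W L K ds As bs"
      unfolding NN_def by blast
    have "ds ! 0 = d" using adm by (simp add: admissible_net_def)
    then have "f = (\<lambda>x \<in> hom_inputs d.
        realize \<sigma> L (unbiased_dims L ds) (unbiased_weights L ds As bs) (zero_biases L) x)"
      unfolding f using assms(1,2) by (intro restrict_ext) (simp add: hom_inputs_def realize_unbiased)
    moreover have "\<forall>l \<le> L. \<forall>i < unbiased_dims L ds ! (l + 1). (zero_biases L ! l) i = 0"
      by (simp add: zero_biases_nth)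
    ultimately show "f \<in> SNN \<sigma> d k (W + 1) L K"
      unfolding SNN_def using admissible_net_unbiased[OF adm] by blast
  qed
qed

end
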